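(* Let $F:\mathbb{C}\to B(\mathfrak{X})$ be entire and let $\mathcal{H}=\mathcal{H}_F$. Suppose there exist an orthonormal basis $\{u_n\}_{n\ge1}$ of $\mathfrak{X}$, points $\{z_n\}_{n\ge1}\subseteq\mathbb{C}$ and nonzero numbers $\{c_n\}$ with $F(z_n)u=c_n\langle u,u_n\rangle_{\mathfrak{X}}u_n$ for all $u\in\mathfrak{X}$, $n\in\mathbb{N}$ (so every $f\in\mathcal{H}$ satisfies $f(z)=\sum_n\langle f(z_n),u_n\rangle_{\mathfrak{X}}F_n(z)/c_n$ with $F_n=F(\cdot)u_n$). Then the following are equivalent: (a) there exist a scalar entire function $Q$ whose zeros are exactly the points $z_n$, all simple, and an $\mathfrak{X}$-valued entire function $A$ with $A(z)\neq0$ for all $z$ and $\langle A(z_n),u_n\rangle_{\mathfrak{X}}\ne0$ for all $n$, such that every $f\in\mathcal{H}$ satisfies $$f(z)=\sum_{n=1}^\infty\langle f(z_n),u_n\rangle_{\mathfrak{X}}\frac{Q(z)}{(z-z_n)Q'(z_n)}\frac{A(z)}{\langle A(z_n),u_n\rangle_{\mathfrak{X}}},\qquad z\in\mathbb{C};$$ (b) $R_z\mathcal{H}_z\subseteq\mathcal{H}$ for all $z\in\mathbb{C}$.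
   Context: $\mathfrak{X}$ is a complex separable Hilbert space. $\mathcal{H}_F=\{f_u:u\in\mathfrak{X}\}$, $f_u(z)=F(z)u$, with norm $\|f_u\|=\inf\{\|w\|_{\mathfrak{X}}:F(\cdot)w=f_u\}$, a reproducing kernel Hilbert space of entire functions. For $\beta\in\mathbb{C}$, $\mathcal{H}_\beta=\{f\in\mathcal{H}:f(\beta)=0\}$ and for $f\in\mathcal{H}_\beta$, $(R_\beta f)(z)=\frac{f(z)}{z-\beta}$ ($z\ne\beta$), $(R_\beta f)(\beta)=f'(\beta)$. *)

theory Defs
  imports "HOL-Analysis.Analysis"
begin

text \<open>The inner product is linear in
  the first argument and conjugate-linear in the second.\<close>

class complex_vector = real_vector +
  fixes scaleC :: "complex \<Rightarrow> 'a \<Rightarrow> 'a"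
  assumes scaleC_add_right: "scaleC a (x + y) = scaleC a x + scaleC a y"
    and scaleC_add_left: "scaleC (a + b) x = scaleC a x + scaleC b x"
    and scaleC_scaleC: "scaleC a (scaleC b x) = scaleC (a * b) x"
    and scaleC_one: "scaleC 1 x = x"
    and scaleR_scaleC: "scaleR r x = scaleC (complex_of_real r) x"

class complex_inner = complex_vector + real_normed_vector +
  fixes cinner :: "'a \<Rightarrow> 'a \<Rightarrow> complex"
  assumes cinner_commute: "cinner x y = cnj (cinner y x)"
    and cinner_add_left: "cinner (x + y) z = cinner x z + cinner y z"
    and cinner_scaleC_left: "cinner (scaleC r x) y = r * cinner x y"
    and cinner_ge_zero: "0 \<le> Re (cinner x x)"
    and cinner_eq_zero_iff: "cinner x x = 0 \<longleftrightarrow> x = 0"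
    and norm_eq_sqrt_cinner: "norm x = sqrt (Re (cinner x x))"

class chilbert_space = complex_inner + complete_space

definition clinear :: "('a::complex_vector \<Rightarrow> 'b::complex_vector) \<Rightarrow> bool" where
  "clinear T \<longleftrightarrow> (\<forall>x y. T (x + y) = T x + T y) \<and> (\<forall>c x. T (scaleC c x) = scaleC c (T x))"

definition bounded_op :: "('a::complex_inner \<Rightarrow> 'a) \<Rightarrow> bool" where
  "bounded_op T \<longleftrightarrow> clinear T \<and> bounded_linear T"

definition entire_op :: "(complex \<Rightarrow> 'a::complex_inner \<Rightarrow> 'a) \<Rightarrow> bool" where
  "entire_op F \<longleftrightarrow> (\<forall>z. bounded_op (F z)) \<and>
     (\<forall>z. \<exists>D. bounded_op D \<and>
        ((\<lambda>h. onorm (\<lambda>u. F (z + h) u - F z u - scaleC h (D u)) / cmod h) \<longlongrightarrow> 0) (at 0))"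

definition has_cderiv :: "(complex \<Rightarrow> 'a::complex_inner) \<Rightarrow> 'a \<Rightarrow> complex \<Rightarrow> bool" where
  "has_cderiv f D z \<longleftrightarrow> (f has_derivative (\<lambda>h. scaleC h D)) (at z)"

definition entire_vec :: "(complex \<Rightarrow> 'a::complex_inner) \<Rightarrow> bool" where
  "entire_vec f \<longleftrightarrow> (\<forall>z. \<exists>D. has_cderiv f D z)"

definition cderiv :: "(complex \<Rightarrow> 'a::complex_inner) \<Rightarrow> complex \<Rightarrow> 'a" where
  "cderiv f z = (THE D. has_cderiv f D z)"

definition orthonormal_basis :: "(nat \<Rightarrow> 'a::complex_inner) \<Rightarrow> bool" where
  "orthonormal_basis u \<longleftrightarrow>
     (\<forall>m n. cinner (u m) (u n) = (if m = n then 1 else 0)) \<and>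
     (\<forall>x. (\<forall>n. cinner x (u n) = 0) \<longrightarrow> x = 0)"

definition HF :: "(complex \<Rightarrow> 'a \<Rightarrow> 'a) \<Rightarrow> (complex \<Rightarrow> 'a) set" where
  "HF F = {(\<lambda>z. F z u) | u. True}"

definition Hzero :: "(complex \<Rightarrow> 'a::zero) set \<Rightarrow> complex \<Rightarrow> (complex \<Rightarrow> 'a) set" where
  "Hzero H \<beta> = {f \<in> H. f \<beta> = 0}"

definition Rop :: "complex \<Rightarrow> (complex \<Rightarrow> 'a::complex_inner) \<Rightarrow> complex \<Rightarrow> 'a" where
  "Rop \<beta> f z = (if z = \<beta> then cderiv f \<beta> else scaleC (inverse (z - \<beta>)) (f z))"

text \<open>The scalar kernel \<open>Q(z) / ((z - z_n) Q'(z_n))\<close>, with its removable singularity at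
  \<open>z = z_n\<close> filled in by its limit value 1.\<close>
definition lagr :: "(complex \<Rightarrow> complex) \<Rightarrow> complex \<Rightarrow> complex \<Rightarrow> complex" where
  "lagr Q w z = (if z = w then 1 else Q z / ((z - w) * deriv Q w))"

end

theory Submission
  imports Defs "HOL-Complex_Analysis.Complex_Analysis"
begin

text \<open>
  (a) \<open>\<Longrightarrow>\<close> (b): the expansion writes every \<open>F(z) x\<close> as \<open>phi x z \<cdot> A(z)\<close> with a scalar
  Lagrange series \<open>phi x\<close>.  If \<open>F(\<beta>) v = 0\<close>, the vector \<open>w\<close> with coefficients
  \<open>\<langle>v, u\<^sub>n\<rangle> / (z\<^sub>n - \<beta>)\<close> exists because the nodes stay away from \<open>\<beta>\<close>, and a partial
  fraction decomposition of each Lagrange term gives \<open>(z - \<beta>) phi w z = phi v z + T Q(z)\<close>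
  for a constant \<open>T\<close>.  When \<open>\<beta>\<close> is not a node, evaluating at \<open>\<beta>\<close> gives \<open>T = 0\<close>; when
  \<open>\<beta> = z\<^sub>k\<close>, the term \<open>T Q(z) / (z - \<beta>)\<close> is the image of a multiple of \<open>u\<^sub>k\<close>.  Either
  way \<open>R\<^sub>\<beta>\<close> maps \<open>F(\<cdot>) v\<close> to some \<open>F(\<cdot>) w'\<close>.

  (b) \<open>\<Longrightarrow>\<close> (a): dividing \<open>F(\<cdot>) u\<^sub>m\<close> by \<open>z - z\<^sub>k\<close> shows that the functions
  \<open>G\<^sub>m(z) = (z - z\<^sub>m) F(z) u\<^sub>m\<close> are all proportional, and \<open>G\<^sub>0\<close> has no zeros off the nodes.
  The nodes other than \<open>z\<^sub>0\<close> are zeros of the nonconstant entire function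
  \<open>\<langle>F(z) u\<^sub>0, u\<^sub>0\<rangle>\<close>, so they tend to infinity and a Weierstrass product \<open>Q\<close> with simple
  zeros exactly at the nodes exists; \<open>A = G\<^sub>0 / Q\<close>, completed at the nodes, is entire,
  zero-free and produces the expansion.
\<close>

section \<open>Complex inner product spaces\<close>

context complex_vector
begin

lemma scaleC_zero_left [simp]: "scaleC 0 x = 0"
  using scaleC_add_left[of 0 0 x] by simp

lemma scaleC_zero_right [simp]: "scaleC a 0 = 0"
  using scaleC_add_right[of a 0 0] by simp

lemma scaleC_minus_right: "scaleC a (- x) = - scaleC a x"
  using scaleC_add_right[of a x "- x"] by (simp add: eq_neg_iff_add_eq_0 add.commute)

lemma scaleC_diff_right: "scaleC a (x - y) = scaleC a x - scaleC a y"
  using scaleC_add_right[of a x "- y"] by (simp add: scaleC_minus_right)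

lemma scaleC_minus_left: "scaleC (- a) x = - scaleC a x"
  using scaleC_add_left[of a "- a" x] by (simp add: eq_neg_iff_add_eq_0 add.commute)

lemma scaleC_diff_left: "scaleC (a - b) x = scaleC a x - scaleC b x"
  using scaleC_add_left[of a "- b" x] by (simp add: scaleC_minus_left)

end

lemma cinner_zero_left [simp]: "cinner 0 y = 0"
  using cinner_add_left[of 0 0 y] by simp

lemma cinner_zero_right [simp]: "cinner y 0 = 0"
  using cinner_commute[of y 0] by simp

lemma cinner_add_right: "cinner x (y + z) = cinner x y + cinner x z"
  by (metis cinner_add_left cinner_commute complex_cnj_add)

lemma cinner_scaleC_right: "cinner x (scaleC r y) = cnj r * cinner x y"
  by (metis cinner_commute cinner_scaleC_left complex_cnj_mult)

lemma cinner_diff_left: "cinner (x - y) z = cinner x z - cinner y z"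
  using cinner_add_left[of "x - y" y z] by simp

lemma cinner_diff_right: "cinner x (y - z) = cinner x y - cinner x z"
  using cinner_add_right[of x "y - z" z] by simp

lemma cinner_sum_left: "cinner (sum f A) y = (\<Sum>i\<in>A. cinner (f i) y)"
  by (induction A rule: infinite_finite_induct) (auto simp: cinner_add_left)

lemma cinner_sum_right: "cinner y (sum f A) = (\<Sum>i\<in>A. cinner y (f i))"
  by (induction A rule: infinite_finite_induct) (auto simp: cinner_add_right)

lemma cinner_self: "cinner x x = complex_of_real ((norm x)\<^sup>2)"
proof -
  have "Im (cinner x x) = 0"
    using cinner_commute[of x x] by (simp add: complex_eq_iff)
  then show ?thesis
    using cinner_ge_zero[of x] norm_eq_sqrt_cinner[of x] by (simp add: complex_eq_iff)
qed

lemma norm_scaleC: "norm (scaleC a x) = cmod a * norm (x :: 'a::complex_inner)"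
proof -
  have "cinner (scaleC a x) (scaleC a x) = complex_of_real ((cmod a)\<^sup>2) * cinner x x"
    by (simp add: cinner_scaleC_left cinner_scaleC_right complex_norm_square[symmetric] mult_ac)
  then have "(norm (scaleC a x))\<^sup>2 = (cmod a * norm x)\<^sup>2"
    unfolding cinner_self of_real_mult[symmetric] of_real_eq_iff by (simp add: power_mult_distrib)
  then show ?thesis by (simp add: power2_eq_iff_nonneg)
qed

lemma scaleC_eq_0_iff [simp]: "scaleC a x = 0 \<longleftrightarrow> a = 0 \<or> x = (0 :: 'a::complex_inner)"
  using norm_scaleC[of a x] by (metis mult_eq_0_iff norm_eq_zero scaleC_zero_left scaleC_zero_right)

lemma scaleC_right_cancel:
  fixes x :: "'a::complex_inner"
  assumes "scaleC a x = scaleC b x" "x \<noteq> 0"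
  shows "a = b"
  using assms by (metis eq_iff_diff_eq_0 scaleC_diff_left scaleC_eq_0_iff)

lemma norm_cinner_le: "cmod (cinner x y) \<le> norm x * norm y"
proof (cases "y = 0")
  case False
  define N where "N = (norm y)\<^sup>2"
  define t where "t = cinner x y / complex_of_real N"
  have N: "N > 0" using False by (simp add: N_def)
  \<comment> \<open>expand \<open>0 \<le> \<langle>x - t y, x - t y\<rangle>\<close> for the projection coefficient \<open>t\<close>\<close>
  have "cinner (x - scaleC t y) (x - scaleC t y)
      = complex_of_real ((norm x)\<^sup>2 - (cmod (cinner x y))\<^sup>2 / N)"
    using N
    by (simp add: cinner_diff_left cinner_diff_right cinner_scaleC_left cinner_scaleC_right
        cinner_self[of y, folded N_def] cinner_self[of x] cinner_commute[of y x] t_def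
        complex_norm_square[symmetric] field_simps)
  then have "(cmod (cinner x y))\<^sup>2 / N \<le> (norm x)\<^sup>2"
    using cinner_ge_zero[of "x - scaleC t y"] by simp
  then have "(cmod (cinner x y))\<^sup>2 \<le> (norm x * norm y)\<^sup>2"
    using N by (simp add: divide_le_eq N_def power_mult_distrib)
  then show ?thesis by (simp add: abs_le_square_iff)
qed simp

lemma bounded_bilinear_scaleC: "bounded_bilinear (\<lambda>(a::complex) (x::'a::complex_inner). scaleC a x)"
proof
  show "\<exists>K. \<forall>a (x::'a). norm (scaleC a x) \<le> norm a * norm x * K"
    by (rule exI[of _ 1]) (simp add: norm_scaleC)
qed (simp_all add: scaleC_add_left scaleC_add_right scaleR_scaleC scaleC_scaleC
      scaleR_conv_of_real mult.commute)

lemma bounded_linear_scaleC_right: "bounded_linear (\<lambda>x::'a::complex_inner. scaleC c x)"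
  by (rule bounded_bilinear.bounded_linear_right[OF bounded_bilinear_scaleC])

lemma bounded_linear_scaleC_left: "bounded_linear (\<lambda>a. scaleC a (x::'a::complex_inner))"
  by (rule bounded_bilinear.bounded_linear_left[OF bounded_bilinear_scaleC])

lemma bounded_linear_cinner_left: "bounded_linear (\<lambda>x::'a::complex_inner. cinner x y)"
proof
  show "\<exists>K. \<forall>x::'a. norm (cinner x y) \<le> norm x * K"
    by (rule exI[of _ "norm y"]) (simp add: norm_cinner_le)
qed (simp_all add: cinner_add_left scaleR_scaleC cinner_scaleC_left scaleR_conv_of_real)

subclass (in chilbert_space) banach ..

lemma sums_scaleC_nonzero_vector:
  fixes y :: "'a::complex_inner"
  assumes "y \<noteq> 0" "(\<lambda>n. scaleC (a n) y) sums s"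
  shows "a sums (cinner s y / cinner y y) \<and> s = scaleC (cinner s y / cinner y y) y"
proof -
  have "(\<lambda>n. a n * cinner y y) sums cinner s y"
    using bounded_linear.sums[OF bounded_linear_cinner_left assms(2)]
    by (simp add: cinner_scaleC_left)
  moreover have "cinner y y \<noteq> 0" using assms(1) cinner_eq_zero_iff by blast
  ultimately have a: "a sums (cinner s y / cinner y y)"
    using sums_divide[of "\<lambda>n. a n * cinner y y" "cinner s y" "cinner y y"] by simp
  have "(\<lambda>n. scaleC (a n) y) sums scaleC (cinner s y / cinner y y) y"
    by (rule bounded_linear.sums[OF bounded_linear_scaleC_left a])
  with a assms(2) show ?thesis using sums_unique2 by blast
qed

section \<open>Orthonormal bases\<close>

lemma orthonormal_basis_cinner:
  "orthonormal_basis u \<Longrightarrow> cinner (u m) (u n) = (if m = n then 1 else 0)"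
  by (simp add: orthonormal_basis_def)

lemma orthonormal_basis_nonzero: "orthonormal_basis u \<Longrightarrow> u n \<noteq> 0"
  using orthonormal_basis_cinner[of u n n] by auto

lemma orthonormal_basis_eqI:
  assumes "orthonormal_basis u" "\<And>n. cinner x (u n) = cinner y (u n)"
  shows "x = y"
proof -
  have "\<forall>n. cinner (x - y) (u n) = 0" by (simp add: cinner_diff_left assms(2))
  then have "x - y = 0" using assms(1) unfolding orthonormal_basis_def by blast
  then show ?thesis by simp
qed

lemma cinner_sum_basis:
  assumes "orthonormal_basis u" "finite S"
  shows "cinner (\<Sum>n\<in>S. scaleC (b n) (u n)) (u m) = (if m \<in> S then b m else 0)"
proof -
  have "cinner (\<Sum>n\<in>S. scaleC (b n) (u n)) (u m) = (\<Sum>n\<in>S. if n = m then b n else 0)"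
    by (intro trans[OF cinner_sum_left] sum.cong)
      (auto simp: cinner_scaleC_left orthonormal_basis_cinner[OF assms(1)])
  then show ?thesis using assms(2) by simp
qed

lemma norm_sum_basis:
  assumes "orthonormal_basis u" "finite S"
  shows "(norm (\<Sum>n\<in>S. scaleC (b n) (u n)))\<^sup>2 = (\<Sum>n\<in>S. (cmod (b n))\<^sup>2)"
proof -
  have "cinner (\<Sum>n\<in>S. scaleC (b n) (u n)) (\<Sum>n\<in>S. scaleC (b n) (u n))
      = (\<Sum>m\<in>S. complex_of_real ((cmod (b m))\<^sup>2))"
    by (intro trans[OF cinner_sum_right] sum.cong)
      (simp_all add: cinner_scaleC_right cinner_sum_basis[OF assms] complex_norm_square[symmetric] mult.commute)
  then show ?thesis by (simp only: cinner_self of_real_sum[symmetric] of_real_eq_iff)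
qed

lemma bessel_inequality:
  assumes "orthonormal_basis u" "finite S"
  shows "(\<Sum>n\<in>S. (cmod (cinner x (u n)))\<^sup>2) \<le> (norm x)\<^sup>2"
proof -
  define P where "P = (\<Sum>n\<in>S. (cmod (cinner x (u n)))\<^sup>2)"
  define s where "s = (\<Sum>n\<in>S. scaleC (cinner x (u n)) (u n))"
  have sx: "cinner s x = complex_of_real P"
    unfolding s_def P_def cinner_sum_left of_real_sum
    by (intro sum.cong refl)
      (simp add: cinner_scaleC_left cinner_commute[of "u _" x] complex_norm_square[symmetric])
  have ss: "cinner s s = complex_of_real P"
    using norm_sum_basis[OF assms] by (simp add: s_def P_def cinner_self)
  have "cinner (x - s) (x - s) = complex_of_real ((norm x)\<^sup>2 - P)"
    using sx ss cinner_commute[of x s]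
    by (simp add: cinner_diff_left cinner_diff_right cinner_self[of x])
  then show ?thesis using cinner_ge_zero[of "x - s"] by (simp add: P_def)
qed

lemma bessel_summable:
  "orthonormal_basis u \<Longrightarrow> summable (\<lambda>n. (cmod (cinner x (u n)))\<^sup>2)"
  by (rule bounded_imp_summable[where B = "(norm x)\<^sup>2"]) (auto intro: bessel_inequality)

lemma riesz_fischer:
  fixes u :: "nat \<Rightarrow> 'a::chilbert_space"
  assumes u: "orthonormal_basis u" and b: "summable (\<lambda>n. (cmod (b n))\<^sup>2)"
  shows "\<exists>v. (\<lambda>n. scaleC (b n) (u n)) sums v \<and> (\<forall>m. cinner v (u m) = b m)"
proof -
  have "summable (\<lambda>n. scaleC (b n) (u n))"
    unfolding summable_Cauchy
  proof (intro allI impI)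
    fix e :: real assume "e > 0"
    then obtain N where N: "\<And>m n. m \<ge> N \<Longrightarrow> norm (\<Sum>k\<in>{m..<n}. (cmod (b k))\<^sup>2) < e\<^sup>2"
      using b[unfolded summable_Cauchy] by (meson zero_less_power)
    have "norm (\<Sum>k\<in>{m..<n}. scaleC (b k) (u k)) < e" if "m \<ge> N" for m n
    proof -
      have "(norm (\<Sum>k\<in>{m..<n}. scaleC (b k) (u k)))\<^sup>2 < e\<^sup>2"
        using N[OF that, of n] by (simp add: norm_sum_basis[OF u] sum_nonneg)
      then show ?thesis using \<open>e > 0\<close> by (simp add: power_less_imp_less_base)
    qed
    then show "\<exists>N. \<forall>m\<ge>N. \<forall>n. norm (\<Sum>k\<in>{m..<n}. scaleC (b k) (u k)) < e" by blast
  qed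
  then obtain v where v: "(\<lambda>n. scaleC (b n) (u n)) sums v" by (auto simp: summable_def)
  have "cinner v (u m) = b m" for m
  proof -
    have "(\<lambda>n. cinner (scaleC (b n) (u n)) (u m)) sums cinner v (u m)"
      by (rule bounded_linear.sums[OF bounded_linear_cinner_left v])
    moreover have "(\<lambda>n. cinner (scaleC (b n) (u n)) (u m)) = (\<lambda>n. if n = m then b n else 0)"
      by (auto simp: cinner_scaleC_left orthonormal_basis_cinner[OF u])
    ultimately show ?thesis using sums_single[of m b] sums_unique2 by metis
  qed
  with v show ?thesis by blast
qed

lemma orthonormal_basis_sums:
  fixes u :: "nat \<Rightarrow> 'a::chilbert_space"
  assumes u: "orthonormal_basis u"
  shows "(\<lambda>n. scaleC (cinner x (u n)) (u n)) sums x"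
proof -
  obtain v where "(\<lambda>n. scaleC (cinner x (u n)) (u n)) sums v" "\<forall>m. cinner v (u m) = cinner x (u m)"
    using riesz_fischer[OF u bessel_summable[OF u]] by blast
  moreover have "v = x" using calculation(2) orthonormal_basis_eqI[OF u] by blast
  ultimately show ?thesis by simp
qed

text \<open>A zero divisor \<open>d n\<close> sends its coefficient to zero, since \<open>x / 0 = 0\<close>.\<close>
lemma orthonormal_basis_divide_coeffs:
  fixes u :: "nat \<Rightarrow> 'a::chilbert_space"
  assumes u: "orthonormal_basis u" and "r > 0" and d: "\<And>n. d n \<noteq> 0 \<Longrightarrow> r \<le> cmod (d n)"
  shows "\<exists>w. \<forall>n. cinner w (u n) = cinner x (u n) / d n"
proof -
  have "(cmod (cinner x (u n) / d n))\<^sup>2 \<le> (cmod (cinner x (u n)))\<^sup>2 / r\<^sup>2" for n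
  proof (cases "d n = 0")
    case False
    then have "cmod (cinner x (u n) / d n) \<le> cmod (cinner x (u n)) / r"
      using d[OF False] \<open>r > 0\<close> by (simp add: norm_divide divide_left_mono)
    then have "(cmod (cinner x (u n) / d n))\<^sup>2 \<le> (cmod (cinner x (u n)) / r)\<^sup>2"
      by (rule power_mono) simp
    then show ?thesis by (simp add: power_divide)
  qed simp
  then have "summable (\<lambda>n. (cmod (cinner x (u n) / d n))\<^sup>2)"
    by (intro summable_comparison_test'[OF summable_divide[OF bessel_summable[OF u]], of 0]) auto
  from riesz_fischer[OF u this] show ?thesis by blast
qed

section \<open>Entire operator-valued functions\<close>

lemma entire_op_bounded_linear: "entire_op F \<Longrightarrow> bounded_linear (F z)"
  by (simp add: entire_op_def bounded_op_def)

lemma entire_op_scaleC: "entire_op F \<Longrightarrow> F z (scaleC a x) = scaleC a (F z x)"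
  by (simp add: entire_op_def bounded_op_def clinear_def)

lemma entire_op_add: "entire_op F \<Longrightarrow> F z (x + y) = F z x + F z y"
  using entire_op_bounded_linear[of F z] by (simp add: linear_simps)

lemma entire_op_diff: "entire_op F \<Longrightarrow> F z (x - y) = F z x - F z y"
  using entire_op_bounded_linear[of F z] by (simp add: linear_simps)

lemma entire_op_sums:
  fixes F :: "complex \<Rightarrow> 'a::chilbert_space \<Rightarrow> 'a"
  assumes "entire_op F" "orthonormal_basis u"
  shows "(\<lambda>n. scaleC (cinner v (u n)) (F z (u n))) sums F z v"
  using bounded_linear.sums[OF entire_op_bounded_linear[OF assms(1)] orthonormal_basis_sums[OF assms(2)]]
  by (simp add: entire_op_scaleC[OF assms(1)])

text \<open>The operator-norm derivative of \<open>F\<close> at \<open>z\<close>, applied to \<open>v\<close>, differentiates \<open>F(\<cdot>) v\<close>.\<close>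
lemma entire_op_has_cderiv:
  fixes F :: "complex \<Rightarrow> 'a::complex_inner \<Rightarrow> 'a"
  assumes "entire_op F"
  shows "\<exists>D. has_cderiv (\<lambda>y. F y v) D z"
proof -
  obtain D where "bounded_op D"
    and lim: "((\<lambda>h. onorm (\<lambda>u. F (z + h) u - F z u - scaleC h (D u)) / cmod h) \<longlongrightarrow> 0) (at 0)"
    using assms unfolding entire_op_def by blast
  then have D: "bounded_linear D" by (simp add: bounded_op_def)
  have bl: "bounded_linear (\<lambda>u. F (z + h) u - F z u - scaleC h (D u))" for h
    by (intro bounded_linear_sub entire_op_bounded_linear[OF assms]
        bounded_linear_compose[OF bounded_linear_scaleC_right D])
  have lim': "((\<lambda>h. onorm (\<lambda>u. F (z + h) u - F z u - scaleC h (D u)) / cmod h * norm v) \<longlongrightarrow> 0) (at 0)"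
    using tendsto_mult[OF lim tendsto_const[of "norm v"]] by simp
  have bound: "norm (norm (F (z + h) v - F z v - scaleC h (D v)) / cmod h)
      \<le> onorm (\<lambda>u. F (z + h) u - F z u - scaleC h (D u)) / cmod h * norm v" for h
  proof -
    have "norm (F (z + h) v - F z v - scaleC h (D v))
        \<le> onorm (\<lambda>u. F (z + h) u - F z u - scaleC h (D u)) * norm v"
      using onorm[OF bl[of h], of v] by simp
    then show ?thesis by (simp add: divide_right_mono)
  qed
  have "((\<lambda>h. norm (F (z + h) v - F z v - scaleC h (D v)) / cmod h) \<longlongrightarrow> 0) (at 0)"
    by (rule Lim_null_comparison[OF always_eventually[OF allI[OF bound]] lim'])
  then have "has_cderiv (\<lambda>y. F y v) (D v) z"
    unfolding has_cderiv_def has_derivative_at using bounded_linear_scaleC_left by auto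
  then show ?thesis by blast
qed

lemma entire_op_isCont: "entire_op F \<Longrightarrow> isCont (\<lambda>y. F y v) z"
  using entire_op_has_cderiv has_derivative_continuous unfolding has_cderiv_def by blast

lemma entire_op_cinner_holomorphic:
  assumes "entire_op F"
  shows "(\<lambda>y. cinner (F y v) w) holomorphic_on S"
proof -
  have "(\<lambda>y. cinner (F y v) w) field_differentiable (at z)" for z
  proof -
    obtain D where "((\<lambda>y. F y v) has_derivative (\<lambda>h. scaleC h D)) (at z)"
      using entire_op_has_cderiv[OF assms] unfolding has_cderiv_def by blast
    from bounded_linear.has_derivative[OF bounded_linear_cinner_left this]
    have "((\<lambda>y. cinner (F y v) w) has_field_derivative (cinner D w)) (at z)"
      unfolding has_field_derivative_def
      by (rule has_derivative_eq_rhs) (simp add: fun_eq_iff cinner_scaleC_left mult.commute)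
    then show ?thesis unfolding field_differentiable_def by blast
  qed
  then show ?thesis
    unfolding holomorphic_on_def using field_differentiable_at_within by blast
qed

lemma cderiv_eqI:
  assumes "has_cderiv f D z"
  shows "cderiv f z = D"
  unfolding cderiv_def
proof (rule the_equality)
  fix D' assume "has_cderiv f D' z"
  then have "(\<lambda>h. scaleC h D') = (\<lambda>h. scaleC h D)"
    using assms unfolding has_cderiv_def by (rule has_derivative_unique)
  from fun_cong[OF this, of 1] show "D' = D" by (simp add: scaleC_one)
qed (rule assms)

lemma has_cderiv_scaleC:
  fixes g :: "complex \<Rightarrow> 'a::complex_inner"
  assumes "(\<phi> has_field_derivative \<phi>') (at z)" "has_cderiv g D z"
  shows "has_cderiv (\<lambda>y. scaleC (\<phi> y) (g y)) (scaleC (\<phi> z) D + scaleC \<phi>' (g z)) z"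
  unfolding has_cderiv_def
  using bounded_bilinear.FDERIV[OF bounded_bilinear_scaleC assms(1)[unfolded has_field_derivative_def]
      assms(2)[unfolded has_cderiv_def]]
  by (rule has_derivative_eq_rhs) (simp add: fun_eq_iff scaleC_scaleC scaleC_add_right mult.commute)

lemma has_cderiv_transform_open:
  "has_cderiv g D z \<Longrightarrow> open S \<Longrightarrow> z \<in> S \<Longrightarrow> (\<And>y. y \<in> S \<Longrightarrow> f y = g y) \<Longrightarrow> has_cderiv f D z"
  unfolding has_cderiv_def by (auto intro: has_derivative_transform_within_open[where f = g])

lemma has_cderiv_scaleC_vanishing:
  fixes g :: "complex \<Rightarrow> 'a::complex_inner"
  assumes "isCont g \<beta>"
  shows "has_cderiv (\<lambda>z. scaleC (z - \<beta>) (g z)) (g \<beta>) \<beta>"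
  unfolding has_cderiv_def has_derivative_at
proof
  have lim: "((\<lambda>t. norm (g (\<beta> + t) - g \<beta>)) \<longlongrightarrow> 0) (at 0)"
    using assms by (simp add: isCont_def LIM_offset_zero tendsto_norm_zero_iff LIM_zero)
  have "norm (g (\<beta> + t) - g \<beta>)
      = norm (scaleC (\<beta> + t - \<beta>) (g (\<beta> + t)) - scaleC (\<beta> - \<beta>) (g \<beta>) - scaleC t (g \<beta>)) / norm t"
    if "t \<noteq> 0" for t
    using that by (simp add: scaleC_diff_right[symmetric] norm_scaleC)
  then show "((\<lambda>t. norm (scaleC (\<beta> + t - \<beta>) (g (\<beta> + t)) - scaleC (\<beta> - \<beta>) (g \<beta>)
      - scaleC t (g \<beta>)) / norm t) \<longlongrightarrow> 0) (at 0)"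
    by (intro Lim_transform_eventually[OF lim]) (auto simp: eventually_at_filter)
qed (rule bounded_linear_scaleC_left)

lemma Rop_scaleC_vanishing:
  assumes "isCont g \<beta>"
  shows "Rop \<beta> (\<lambda>z. scaleC (z - \<beta>) (g z)) = g"
proof
  fix z show "Rop \<beta> (\<lambda>z. scaleC (z - \<beta>) (g z)) z = g z"
    unfolding Rop_def
    using cderiv_eqI[OF has_cderiv_scaleC_vanishing[OF assms]]
    by (simp add: scaleC_scaleC scaleC_one)
qed

text \<open>Condition (b), stated on the parametrising vectors.\<close>
definition quotient_closed :: "(complex \<Rightarrow> 'a::complex_inner \<Rightarrow> 'a) \<Rightarrow> bool" where
  "quotient_closed F \<longleftrightarrow> (\<forall>\<beta> v. F \<beta> v = 0 \<longrightarrow>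
     (\<exists>w. \<forall>z. z \<noteq> \<beta> \<longrightarrow> F z w = scaleC (inverse (z - \<beta>)) (F z v)))"

lemma Rop_closed_iff_quotient_closed:
  assumes F: "entire_op F"
  shows "(\<forall>\<beta>. \<forall>f \<in> Hzero (HF F) \<beta>. Rop \<beta> f \<in> HF F) \<longleftrightarrow> quotient_closed F"
  unfolding quotient_closed_def
proof (intro iffI allI impI ballI)
  fix \<beta> v assume "\<forall>\<beta>. \<forall>f \<in> Hzero (HF F) \<beta>. Rop \<beta> f \<in> HF F" and "F \<beta> v = 0"
  then have "Rop \<beta> (\<lambda>z. F z v) \<in> HF F" by (auto simp: Hzero_def HF_def)
  then obtain w where w: "Rop \<beta> (\<lambda>z. F z v) = (\<lambda>z. F z w)" by (auto simp: HF_def)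
  have "F z w = scaleC (inverse (z - \<beta>)) (F z v)" if "z \<noteq> \<beta>" for z
    using fun_cong[OF w, of z] that by (simp add: Rop_def)
  then show "\<exists>w. \<forall>z. z \<noteq> \<beta> \<longrightarrow> F z w = scaleC (inverse (z - \<beta>)) (F z v)"
    by blast
next
  fix \<beta> f
  assume quot: "\<forall>\<beta> v. F \<beta> v = 0 \<longrightarrow> (\<exists>w. \<forall>z. z \<noteq> \<beta> \<longrightarrow> F z w = scaleC (inverse (z - \<beta>)) (F z v))"
    and "f \<in> Hzero (HF F) \<beta>"
  then obtain v where f: "f = (\<lambda>z. F z v)" and "F \<beta> v = 0" by (auto simp: Hzero_def HF_def)
  with quot obtain w where w: "\<And>z. z \<noteq> \<beta> \<Longrightarrow> F z w = scaleC (inverse (z - \<beta>)) (F z v)" by blast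
  have "f z = scaleC (z - \<beta>) (F z w)" for z
    using \<open>F \<beta> v = 0\<close> by (cases "z = \<beta>") (simp_all add: f w scaleC_scaleC scaleC_one)
  then have "f = (\<lambda>z. scaleC (z - \<beta>) (F z w))" by blast
  then show "Rop \<beta> f \<in> HF F"
    by (auto simp: Rop_scaleC_vanishing[OF entire_op_isCont[OF F]] HF_def)
qed

lemma isCont_eq_0_if_eq_0_off_two_points:
  fixes h :: "complex \<Rightarrow> 'a::real_normed_vector"
  assumes "isCont h p" "\<And>z. z \<noteq> p \<Longrightarrow> z \<noteq> q \<Longrightarrow> h z = 0"
  shows "h p = 0"
proof -
  define d where "d = (if q = p then 1 else dist q p)"
  have "d > 0" by (simp add: d_def)
  have "eventually (\<lambda>z. h z = 0) (at p)"
    unfolding eventually_at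
    by (rule exI[of _ d]) (use \<open>d > 0\<close> assms(2) in \<open>auto simp: d_def split: if_splits\<close>)
  then have "h \<midarrow>p\<rightarrow> 0" by (rule tendsto_eventually)
  with assms(1) show ?thesis unfolding isCont_def using LIM_unique by blast
qed

lemma lagr_holomorphic:
  assumes "Q holomorphic_on UNIV" "Q w = 0" "deriv Q w \<noteq> 0"
  shows "lagr Q w holomorphic_on UNIV"
proof -
  have "(\<lambda>z. (if z = w then deriv Q w else (Q z - Q w) / (z - w)) / deriv Q w) holomorphic_on UNIV"
    by (intro holomorphic_intros pole_lemma assms(1)) (simp_all add: assms(3))
  also have "(\<lambda>z. (if z = w then deriv Q w else (Q z - Q w) / (z - w)) / deriv Q w) = lagr Q w"
    using assms(2,3) by (auto simp: fun_eq_iff lagr_def)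
  finally show ?thesis .
qed

lemma lagrange_term_partial_fraction:
  fixes z \<beta> s d a q :: complex
  assumes "s \<noteq> \<beta>" "z \<noteq> s" "d \<noteq> 0"
  shows "(z - \<beta>) * (a / (s - \<beta>) * (q / ((z - s) * d))) - a * (q / ((z - s) * d))
    = q * (a / ((s - \<beta>) * d))"
  using assms by (simp add: divide_simps) (simp add: algebra_simps)

lemma deriv_nonzero_if_zorder_1:
  fixes f :: "complex \<Rightarrow> complex"
  assumes "f holomorphic_on UNIV" "f w \<noteq> 0" "zorder f \<xi> = 1" "f \<xi> = 0"
  shows "deriv f \<xi> \<noteq> 0"
proof -
  define g where "g = zor_poly f \<xi>"
  obtain r where r: "r > 0" "g holomorphic_on cball \<xi> r"
      "\<forall>w\<in>cball \<xi> r. f w = g w * (w - \<xi>) ^ nat (zorder f \<xi>) \<and> g w \<noteq> 0"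
    using zorder_exist_zero[OF assms(1) open_UNIV connected_UNIV UNIV_I, of \<xi>] assms(2,4)
    unfolding g_def by auto
  then have f: "\<And>w. w \<in> ball \<xi> r \<Longrightarrow> g w * (w - \<xi>) = f w" using assms(3) by auto
  have "g holomorphic_on ball \<xi> r" using r(2) by (rule holomorphic_on_subset) auto
  then obtain g' where "(g has_field_derivative g') (at \<xi>)"
    using holomorphic_on_imp_differentiable_at[of g "ball \<xi> r" \<xi>] r(1)
    by (auto simp: field_differentiable_def)
  then have "((\<lambda>w. g w * (w - \<xi>)) has_field_derivative g \<xi>) (at \<xi>)"
    by (auto intro!: derivative_eq_intros)
  then have "(f has_field_derivative g \<xi>) (at \<xi>)"
    unfolding has_field_derivative_def
    by (rule has_derivative_transform_within_open[OF _ open_ball[of \<xi> r]]) (use r(1) f in auto)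
  then show ?thesis using r(1,3) DERIV_imp_deriv by fastforce
qed

text \<open>A Weierstrass product, shifted so that no \<open>z\<^sub>n\<close> is the origin.\<close>
lemma entire_with_simple_zeros:
  fixes zs :: "nat \<Rightarrow> complex"
  assumes inj: "inj zs" and lim: "filterlim zs at_infinity sequentially"
  shows "\<exists>Q. Q holomorphic_on UNIV \<and> {z. Q z = 0} = range zs \<and> (\<forall>n. deriv Q (zs n) \<noteq> 0)"
proof -
  have "range zs \<noteq> UNIV" using uncountable_UNIV_complex by (metis countableI_type countable_image)
  then obtain w0 where w0: "w0 \<notin> range zs" by blast
  define a where "a n = zs n - w0" for n
  have a_vimage: "a -` {a n} = {n}" for n using inj by (auto simp: a_def inj_def)
  interpret W: weierstrass_product' a
  proof
    show "a n \<noteq> 0" for n using w0 by (auto simp: a_def)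
    show "filterlim a at_infinity at_top" unfolding a_def
      using tendsto_add_filterlim_at_infinity[OF tendsto_const[of "- w0"] lim] by (simp add: add.commute)
    show "finite (a -` {z})" if "z \<in> range a" for z using that a_vimage by auto
  qed
  define Q where "Q z = W.f (z - w0)" for z
  have "Q holomorphic_on UNIV" unfolding Q_def
    by (intro holomorphic_on_compose_gen[unfolded o_def, OF _ W.holomorphic])
      (auto intro!: holomorphic_intros)
  moreover have "{z. Q z = 0} = range zs"
    by (auto simp: Q_def W.zero a_def image_iff)
  moreover have "deriv Q (zs n) \<noteq> 0" for n
  proof -
    have "(W.f has_field_derivative deriv W.f (a n)) (at (a n))"
      using W.holomorphic by (auto intro!: holomorphic_derivI[where S = UNIV])
    then have "(Q has_field_derivative deriv W.f (a n)) (at (zs n))"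
      using DERIV_shift[where z = "- w0" and f = W.f and x = "zs n"] by (simp add: Q_def[abs_def] a_def)
    moreover have "deriv W.f (a n) \<noteq> 0"
      by (rule deriv_nonzero_if_zorder_1[OF W.holomorphic, of 0])
        (use W.zero W.a_nonzero a_vimage W.zorder in auto)
    ultimately show ?thesis using DERIV_imp_deriv by metis
  qed
  ultimately show ?thesis by blast
qed

lemma filterlim_at_infinity_if_finite_in_cballs:
  fixes zs :: "nat \<Rightarrow> complex"
  assumes inj: "inj zs" and fin: "\<And>R. finite (range zs \<inter> cball 0 R)"
  shows "filterlim zs at_infinity sequentially"
  unfolding filterlim_at_infinity[OF order_refl]
proof (intro allI impI)
  fix R :: real
  have "{n. \<not> R \<le> norm (zs n)} \<subseteq> zs -` (range zs \<inter> cball 0 R)" by auto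
  moreover have "finite (zs -` (range zs \<inter> cball 0 R))"
    using finite_vimageI[OF fin inj] .
  ultimately have "finite {n. \<not> R \<le> norm (zs n)}" by (rule finite_subset)
  then show "eventually (\<lambda>n. R \<le> norm (zs n)) sequentially"
    by (simp add: eventually_cofinite cofinite_eq_sequentially[symmetric])
qed

section \<open>Operators diagonal at the nodes\<close>

locale diagonal_at_nodes =
  fixes F :: "complex \<Rightarrow> 'x::chilbert_space \<Rightarrow> 'x"
    and u :: "nat \<Rightarrow> 'x" and zs :: "nat \<Rightarrow> complex" and c :: "nat \<Rightarrow> complex"
  assumes entire: "entire_op F"
    and basis: "orthonormal_basis u"
    and c_nonzero: "\<forall>n. c n \<noteq> 0"
    and F_node: "\<forall>n v. F (zs n) v = scaleC (c n * cinner v (u n)) (u n)"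
begin

lemma F_node_basis: "F (zs n) (u m) = (if m = n then scaleC (c n) (u n) else 0)"
  using F_node orthonormal_basis_cinner[OF basis, of m n] by auto

lemma cinner_F_node: "cinner (F (zs n) v) (u n) = c n * cinner v (u n)"
  using F_node orthonormal_basis_cinner[OF basis, of n n] by (simp add: cinner_scaleC_left)

lemma F_node_self_nonzero: "F (zs n) (u n) \<noteq> 0"
  using F_node_basis c_nonzero orthonormal_basis_nonzero[OF basis] by simp

lemma inj_nodes: "inj zs"
proof (rule injI)
  fix m n assume "zs m = zs n"
  then have "F (zs m) (u m) = F (zs n) (u m)" by simp
  then show "m = n" using F_node_basis F_node_self_nonzero by metis
qed

lemma nodes_eq_iff: "zs m = zs n \<longleftrightarrow> m = n"
  using inj_nodes by (auto simp: inj_def)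

lemma lagr_node: "Q (zs m) = 0 \<Longrightarrow> lagr Q (zs n) (zs m) = (if m = n then 1 else 0)"
  using inj_nodes by (auto simp: lagr_def inj_def)

lemma cinner_quotient_node:
  assumes "F (zs n) w = scaleC (inverse (zs n - \<beta>)) (F (zs n) v)"
  shows "cinner w (u n) = cinner v (u n) / (zs n - \<beta>)"
proof -
  have "c n * cinner w (u n) = c n * (cinner v (u n) / (zs n - \<beta>))"
    using arg_cong[OF assms, of "\<lambda>x. cinner x (u n)"]
    by (simp add: cinner_F_node cinner_scaleC_left field_simps)
  then show ?thesis using c_nonzero mult_left_cancel by blast
qed

end

section \<open>A Lagrange expansion gives closedness under difference quotients\<close>

locale lagrange_expansion = diagonal_at_nodes +
  fixes Q :: "complex \<Rightarrow> complex" and A :: "complex \<Rightarrow> 'x::chilbert_space"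
  assumes Q_holomorphic: "Q holomorphic_on UNIV"
    and Q_zeros: "{z. Q z = 0} = range zs"
    and deriv_Q_nonzero: "\<forall>n. deriv Q (zs n) \<noteq> 0"
    and A_nonzero: "\<forall>z. A z \<noteq> 0"
    and A_node: "\<forall>n. cinner (A (zs n)) (u n) \<noteq> 0"
    and expansion: "\<forall>f \<in> HF F. \<forall>z.
      (\<lambda>n. scaleC (cinner (f (zs n)) (u n) * lagr Q (zs n) z / cinner (A (zs n)) (u n)) (A z)) sums f z"
begin

definition coef :: "'x \<Rightarrow> nat \<Rightarrow> complex" where
  "coef x n = cinner (F (zs n) x) (u n) / cinner (A (zs n)) (u n)"

text \<open>Every \<open>F(z) x\<close> is a multiple \<open>phi x z\<close> of the single vector \<open>A(z)\<close>.\<close>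
definition phi :: "'x \<Rightarrow> complex \<Rightarrow> complex" where
  "phi x z = (\<Sum>n. coef x n * lagr Q (zs n) z)"

lemma Q_eq_0_iff: "Q z = 0 \<longleftrightarrow> z \<in> range zs"
  using Q_zeros by blast

lemma coef_eq: "coef x n = c n * cinner x (u n) / cinner (A (zs n)) (u n)"
  by (simp add: coef_def cinner_F_node)

lemma phi_sums: "(\<lambda>n. coef x n * lagr Q (zs n) z) sums phi x z"
  and F_eq_phi: "F z x = scaleC (phi x z) (A z)"
proof -
  have "(\<lambda>z. F z x) \<in> HF F" by (auto simp: HF_def)
  from expansion[rule_format, OF this, of z]
  have "(\<lambda>n. scaleC (coef x n * lagr Q (zs n) z) (A z)) sums F z x" by (simp add: coef_def)
  from sums_scaleC_nonzero_vector[OF _ this] A_nonzero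
  show "(\<lambda>n. coef x n * lagr Q (zs n) z) sums phi x z" "F z x = scaleC (phi x z) (A z)"
    unfolding phi_def by (metis sums_unique)+
qed

lemma phi_node: "phi x (zs m) = coef x m"
proof -
  have "(\<lambda>n. coef x n * lagr Q (zs n) (zs m)) = (\<lambda>n. if n = m then coef x n else 0)"
    using lagr_node[of Q m] Q_eq_0_iff by auto
  then show ?thesis using phi_sums[of x "zs m"] sums_single[of m "coef x"] sums_unique2 by metis
qed

lemma phi_basis: "phi (u k) z = coef (u k) k * lagr Q (zs k) z"
proof -
  have "(\<lambda>n. coef (u k) n * lagr Q (zs n) z) = (\<lambda>n. if n = k then coef (u k) k * lagr Q (zs k) z else 0)"
    using orthonormal_basis_cinner[OF basis, of k] by (auto simp: coef_eq)
  then have "(\<lambda>n. coef (u k) n * lagr Q (zs n) z) sums (coef (u k) k * lagr Q (zs k) z)"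
    using sums_single[of k "\<lambda>_. coef (u k) k * lagr Q (zs k) z"] by simp
  then show ?thesis using phi_sums[of "u k" z] sums_unique2 by blast
qed

lemma exists_non_node: "\<exists>z. z \<notin> S \<and> z \<notin> range zs" if "countable S"
proof -
  have "countable (S \<union> range zs)" using that by simp
  then have "S \<union> range zs \<noteq> UNIV" using uncountable_UNIV_complex by metis
  then show ?thesis by blast
qed

lemma nodes_separated: "\<exists>r>0. \<forall>n. zs n \<noteq> \<beta> \<longrightarrow> r \<le> cmod (zs n - \<beta>)"
proof -
  obtain z0 where "z0 \<notin> range zs" using exists_non_node[of "{}"] by auto
  then have "eventually (\<lambda>z. Q z \<noteq> 0) (at \<beta>)"
    using non_zero_neighbour_alt[OF Q_holomorphic open_UNIV connected_UNIV, of \<beta> z0] Q_eq_0_iff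
    by auto
  then obtain r where "r > 0" "\<And>z. z \<noteq> \<beta> \<Longrightarrow> dist z \<beta> < r \<Longrightarrow> Q z \<noteq> 0"
    unfolding eventually_at by blast
  then show ?thesis using Q_eq_0_iff by (metis dist_norm not_le rangeI)
qed

text \<open>When \<open>w\<close> is the coefficientwise quotient of \<open>v\<close> by \<open>z\<^sub>n - \<beta>\<close>, partial fractions
  turn the \<open>n\<close>-th term of \<open>(z - \<beta>) phi w z - phi v z\<close> into \<open>Q(z) tau v \<beta> n\<close>.\<close>
definition tau :: "'x \<Rightarrow> complex \<Rightarrow> nat \<Rightarrow> complex" where
  "tau v \<beta> n = coef v n / ((zs n - \<beta>) * deriv Q (zs n))"

context
  fixes v w :: 'x and \<beta> :: complex
  assumes v: "F \<beta> v = 0" and w: "\<forall>n. cinner w (u n) = cinner v (u n) / (zs n - \<beta>)"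
begin

lemma coef_quotient: "coef w n = coef v n / (zs n - \<beta>)"
  using w by (simp add: coef_eq)

lemma phi_quotient_sums:
  assumes "Q z \<noteq> 0" "z \<noteq> \<beta>"
  shows "(\<lambda>n. Q z * tau v \<beta> n) sums ((z - \<beta>) * phi w z - phi v z)"
proof -
  have "(z - \<beta>) * (coef w n * lagr Q (zs n) z) - coef v n * lagr Q (zs n) z = Q z * tau v \<beta> n" for n
  proof (cases "zs n = \<beta>")
    case True
    then have "coef v n = 0" using v by (simp add: coef_def)
    then show ?thesis using True by (simp add: coef_quotient tau_def)
  next
    case False
    have "z \<noteq> zs n" using assms(1) Q_eq_0_iff by auto
    then have L: "lagr Q (zs n) z = Q z / ((z - zs n) * deriv Q (zs n))" by (simp add: lagr_def)
    show ?thesis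
      unfolding coef_quotient tau_def L
      by (intro lagrange_term_partial_fraction) (use False \<open>z \<noteq> zs n\<close> deriv_Q_nonzero in auto)
  qed
  moreover have "(\<lambda>n. (z - \<beta>) * (coef w n * lagr Q (zs n) z) - coef v n * lagr Q (zs n) z)
      sums ((z - \<beta>) * phi w z - phi v z)"
    by (intro sums_diff sums_mult phi_sums)
  ultimately show ?thesis by simp
qed

lemma tau_summable: "summable (tau v \<beta>)"
proof -
  obtain z0 where z0: "z0 \<notin> {\<beta>}" "z0 \<notin> range zs" using exists_non_node[of "{\<beta>}"] by auto
  then have "Q z0 \<noteq> 0" using Q_eq_0_iff by auto
  with phi_quotient_sums[OF this] z0(1) show ?thesis
    using summable_mult[of _ "inverse (Q z0)"] sums_summable by fastforce
qed

lemma phi_quotient: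
  assumes "z \<noteq> \<beta>"
  shows "(z - \<beta>) * phi w z = phi v z + Q z * suminf (tau v \<beta>)"
proof (cases "Q z = 0")
  case True
  then obtain m where "z = zs m" using Q_eq_0_iff by auto
  then show ?thesis using True assms by (simp add: phi_node coef_quotient)
next
  case False
  have "(\<lambda>n. Q z * tau v \<beta> n) sums (Q z * suminf (tau v \<beta>))"
    by (rule sums_mult[OF summable_sums[OF tau_summable]])
  then show ?thesis using phi_quotient_sums[OF False assms] sums_unique2 by fastforce
qed

lemma tau_sum_off_nodes:
  assumes "\<beta> \<notin> range zs"
  shows "suminf (tau v \<beta>) = 0"
proof -
  have Q\<beta>: "Q \<beta> \<noteq> 0" using assms Q_eq_0_iff by blast
  have "coef v n * lagr Q (zs n) \<beta> = - Q \<beta> * tau v \<beta> n" for n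
  proof -
    have "\<beta> \<noteq> zs n" using assms by auto
    then have "lagr Q (zs n) \<beta> = Q \<beta> / ((\<beta> - zs n) * deriv Q (zs n))" by (simp add: lagr_def)
    then show ?thesis
      unfolding tau_def
      by (metis minus_diff_eq minus_divide_right minus_mult_left mult.commute
          times_divide_eq_left times_divide_eq_right)
  qed
  then have "(\<lambda>n. - Q \<beta> * tau v \<beta> n) sums phi v \<beta>" using phi_sums[of v \<beta>] by simp
  moreover have "(\<lambda>n. - Q \<beta> * tau v \<beta> n) sums (- Q \<beta> * suminf (tau v \<beta>))"
    by (rule sums_mult[OF summable_sums[OF tau_summable]])
  ultimately have "phi v \<beta> = - Q \<beta> * suminf (tau v \<beta>)" by (rule sums_unique2)
  moreover have "phi v \<beta> = 0"
    using F_eq_phi[of \<beta> v] A_nonzero by (simp add: v)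
  ultimately show ?thesis using Q\<beta> by simp
qed

text \<open>At a node \<open>\<beta> = z\<^sub>k\<close> the constant left over is removed by subtracting a multiple
  of \<open>u\<^sub>k\<close>, whose image is the Lagrange term at \<open>z\<^sub>k\<close>.\<close>
lemma quotient_vector: "\<exists>w'. \<forall>z. z \<noteq> \<beta> \<longrightarrow> F z w' = scaleC (inverse (z - \<beta>)) (F z v)"
proof (cases "\<beta> \<in> range zs")
  case False
  have "F z w = scaleC (inverse (z - \<beta>)) (F z v)" if "z \<noteq> \<beta>" for z
  proof -
    have "phi w z = inverse (z - \<beta>) * phi v z"
      using phi_quotient[OF that] that tau_sum_off_nodes[OF False] by (simp add: field_simps)
    then show ?thesis by (simp add: F_eq_phi[of z] scaleC_scaleC)
  qed
  then show ?thesis by (intro exI[of _ w]) blast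
next
  case True
  then obtain k where k: "\<beta> = zs k" by auto
  define T where "T = suminf (tau v \<beta>)"
  define \<kappa> where "\<kappa> = T * deriv Q \<beta> / coef (u k) k"
  have "coef (u k) k \<noteq> 0"
    using c_nonzero A_node orthonormal_basis_cinner[OF basis, of k k] by (simp add: coef_eq)
  moreover have "deriv Q \<beta> \<noteq> 0" using deriv_Q_nonzero k by simp
  moreover have "phi (u k) z = coef (u k) k * (Q z / ((z - \<beta>) * deriv Q \<beta>))" if "z \<noteq> \<beta>" for z
    using that k by (simp add: phi_basis lagr_def)
  ultimately have \<kappa>: "\<kappa> * phi (u k) z = Q z * T / (z - \<beta>)" if "z \<noteq> \<beta>" for z
    using that by (simp add: \<kappa>_def field_simps)
  have diff: "phi w z - \<kappa> * phi (u k) z = inverse (z - \<beta>) * phi v z" if "z \<noteq> \<beta>" for z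
  proof -
    have "phi w z = (phi v z + Q z * T) / (z - \<beta>)"
      using phi_quotient[OF that] that by (simp add: T_def eq_divide_eq mult.commute)
    with \<kappa>[OF that] show ?thesis
      unfolding divide_inverse_commute[symmetric] by (simp add: diff_divide_distrib[symmetric])
  qed
  have "F z (w - scaleC \<kappa> (u k)) = scaleC (inverse (z - \<beta>)) (F z v)" if "z \<noteq> \<beta>" for z
  proof -
    have "F z (w - scaleC \<kappa> (u k)) = scaleC (phi w z) (A z) - scaleC (\<kappa> * phi (u k) z) (A z)"
      by (simp add: entire_op_diff[OF entire] entire_op_scaleC[OF entire] F_eq_phi[of z] scaleC_scaleC)
    also have "\<dots> = scaleC (inverse (z - \<beta>) * phi v z) (A z)"
      by (simp only: scaleC_diff_left[symmetric] diff[OF that])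
    finally show ?thesis by (simp add: F_eq_phi[of z v] scaleC_scaleC)
  qed
  then show ?thesis by (intro exI[of _ "w - scaleC \<kappa> (u k)"]) blast
qed

end

lemma quotient_closed: "quotient_closed F"
  unfolding quotient_closed_def
proof (intro allI impI)
  fix \<beta> v assume "F \<beta> v = 0"
  obtain r where r: "r > 0" "\<forall>n. zs n \<noteq> \<beta> \<longrightarrow> r \<le> cmod (zs n - \<beta>)"
    using nodes_separated by blast
  then have "\<And>n. zs n - \<beta> \<noteq> 0 \<Longrightarrow> r \<le> cmod (zs n - \<beta>)" by simp
  with orthonormal_basis_divide_coeffs[OF basis r(1), where d = "\<lambda>n. zs n - \<beta>" and x = v]
  obtain w where "\<forall>n. cinner w (u n) = cinner v (u n) / (zs n - \<beta>)" by blast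
  from quotient_vector[OF \<open>F \<beta> v = 0\<close> this]
  show "\<exists>w. \<forall>z. z \<noteq> \<beta> \<longrightarrow> F z w = scaleC (inverse (z - \<beta>)) (F z v)" .
qed

end

section \<open>Closedness under difference quotients gives a Lagrange expansion\<close>

locale diagonal_quotient_closed = diagonal_at_nodes F u zs c
  for F :: "complex \<Rightarrow> 'x::chilbert_space \<Rightarrow> 'x" and u zs c +
  assumes quotient: "quotient_closed F"
begin

lemma obtain_quotient_vector:
  assumes "F \<beta> v = 0"
  obtains w where "\<And>z. z \<noteq> \<beta> \<Longrightarrow> F z w = scaleC (inverse (z - \<beta>)) (F z v)"
  using quotient assms unfolding quotient_closed_def by blast

text \<open>\<open>G n = (z - z\<^sub>n) F\<^sub>n(z)\<close>.  All \<open>G n\<close> turn out to be proportional, and the vector of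
  condition (a) is \<open>G 0 / Q\<close>.\<close>
definition G :: "nat \<Rightarrow> complex \<Rightarrow> 'x::chilbert_space" where
  "G n z = scaleC (z - zs n) (F z (u n))"

text \<open>The quotient of \<open>u\<^sub>m\<close> at \<open>z\<^sub>k\<close> has all its coefficients determined by the nodes,
  except the one at \<open>u\<^sub>k\<close>.\<close>
lemma obtain_quotient_of_basis:
  assumes "k \<noteq> m"
  obtains t where "\<And>z. z \<noteq> zs k \<Longrightarrow>
    scaleC (inverse (zs m - zs k)) (F z (u m)) + scaleC t (F z (u k)) = scaleC (inverse (z - zs k)) (F z (u m))"
proof -
  have "F (zs k) (u m) = 0" using F_node_basis assms by simp
  with obtain_quotient_vector
  obtain w where w: "\<And>z. z \<noteq> zs k \<Longrightarrow> F z w = scaleC (inverse (z - zs k)) (F z (u m))"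
    by blast
  define t where "t = cinner w (u k)"
  have "cinner w (u n) = cinner (scaleC (inverse (zs m - zs k)) (u m) + scaleC t (u k)) (u n)" for n
  proof (cases "n = k")
    case False
    then have "cinner w (u n) = cinner (u m) (u n) / (zs n - zs k)"
      by (intro cinner_quotient_node w) (simp add: nodes_eq_iff)
    then show ?thesis
      using False orthonormal_basis_cinner[OF basis, of _ n]
      by (simp add: cinner_add_left cinner_scaleC_left divide_inverse)
  qed (use assms orthonormal_basis_cinner[OF basis, of _ k] in
      \<open>simp add: t_def cinner_add_left cinner_scaleC_left\<close>)
  then have "w = scaleC (inverse (zs m - zs k)) (u m) + scaleC t (u k)"
    by (rule orthonormal_basis_eqI[OF basis])
  with w show ?thesis
    by (intro that[of t]) (simp add: entire_op_add[OF entire] entire_op_scaleC[OF entire])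
qed

lemma G_proportional:
  assumes "k \<noteq> m"
  shows "\<exists>\<sigma>. \<forall>z. G m z = scaleC \<sigma> (G k z)"
proof -
  obtain t where t: "\<And>z. z \<noteq> zs k \<Longrightarrow>
    scaleC (inverse (zs m - zs k)) (F z (u m)) + scaleC t (F z (u k)) = scaleC (inverse (z - zs k)) (F z (u m))"
    using obtain_quotient_of_basis[OF assms] by blast
  have "zs m - zs k \<noteq> 0" using assms by (simp add: nodes_eq_iff)
  have "G m z = scaleC (- t * (zs m - zs k)) (G k z)" for z
  proof (cases "z = zs k")
    case True
    then show ?thesis using F_node_basis assms by (simp add: G_def)
  next
    case False
    define s where "s = (z - zs k) * (zs m - zs k)"
    have "scaleC s (scaleC (inverse (zs m - zs k)) (F z (u m)) + scaleC t (F z (u k)))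
        = scaleC s (scaleC (inverse (z - zs k)) (F z (u m)))"
      using t[OF False] by simp
    moreover have "s * inverse (zs m - zs k) = z - zs k" "s * inverse (z - zs k) = zs m - zs k"
      using False \<open>zs m - zs k \<noteq> 0\<close> by (simp_all add: s_def)
    ultimately have "scaleC (z - zs k) (F z (u m)) + scaleC (s * t) (F z (u k)) = scaleC (zs m - zs k) (F z (u m))"
      by (simp add: scaleC_add_right scaleC_scaleC)
    then have "scaleC (s * t) (F z (u k)) = scaleC (zs m - zs k) (F z (u m)) - scaleC (z - zs k) (F z (u m))"
      by (simp add: eq_diff_eq add.commute)
    also have "\<dots> = - scaleC (z - zs m) (F z (u m))"
      by (simp add: scaleC_diff_left[symmetric] scaleC_minus_left[symmetric])
    finally have "G m z = - scaleC (s * t) (F z (u k))" by (simp add: G_def)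
    then show ?thesis by (simp add: G_def s_def scaleC_scaleC scaleC_minus_left mult_ac)
  qed
  then show ?thesis by blast
qed

lemma G_not_identically_zero: "\<exists>z. G m z \<noteq> 0"
proof (rule ccontr)
  assume "\<not> (\<exists>z. G m z \<noteq> 0)"
  then have "F z (u m) = 0" if "z \<noteq> zs m" "z \<noteq> zs m" for z
    using that by (auto simp: G_def)
  then have "F (zs m) (u m) = 0"
    by (rule isCont_eq_0_if_eq_0_off_two_points[OF entire_op_isCont[OF entire]])
  then show False using F_node_self_nonzero by blast
qed

definition ratio :: "nat \<Rightarrow> complex" where
  "ratio m = (SOME \<sigma>. \<forall>z. G m z = scaleC \<sigma> (G 0 z))"

lemma G_eq_ratio: "G m z = scaleC (ratio m) (G 0 z)"
proof -
  have "\<exists>\<sigma>. \<forall>z. G m z = scaleC \<sigma> (G 0 z)"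
    using G_proportional[of 0 m] by (cases "m = 0") (auto intro: exI[of _ 1] simp: scaleC_one)
  then show ?thesis unfolding ratio_def by (rule someI_ex[where P = "\<lambda>\<sigma>. \<forall>z. G m z = scaleC \<sigma> (G 0 z)", THEN spec])
qed

lemma ratio_nonzero: "ratio m \<noteq> 0"
  using G_not_identically_zero[of m] G_eq_ratio[of m] by auto

lemma G0_eq: "G 0 z = scaleC (inverse (ratio n) * (z - zs n)) (F z (u n))"
proof -
  have "G 0 z = scaleC (inverse (ratio n)) (G n z)"
    using ratio_nonzero[of n] by (simp add: G_eq_ratio[of n z] scaleC_scaleC scaleC_one)
  then show ?thesis by (simp add: G_def scaleC_scaleC)
qed

text \<open>Off the nodes \<open>G 0\<close> cannot vanish: otherwise \<open>F(\<cdot>) u\<^sub>0\<close> would have a quotient at \<open>p\<close>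
  proportional to \<open>F(\<cdot>) u\<^sub>0\<close> itself, forcing \<open>F(\<cdot>) u\<^sub>0 = 0\<close> off \<open>{z\<^sub>0, p}\<close>.\<close>
lemma G0_nonzero:
  assumes "p \<notin> range zs"
  shows "G 0 p \<noteq> 0"
proof
  assume "G 0 p = 0"
  moreover have "p \<noteq> zs 0" using assms by auto
  ultimately have "F p (u 0) = 0" by (simp add: G_def)
  with obtain_quotient_vector
  obtain w where w: "\<And>z. z \<noteq> p \<Longrightarrow> F z w = scaleC (inverse (z - p)) (F z (u 0))"
    by blast
  have "cinner w (u n) = cinner (scaleC (inverse (zs 0 - p)) (u 0)) (u n)" for n
  proof -
    have "cinner w (u n) = cinner (u 0) (u n) / (zs n - p)"
      using assms by (intro cinner_quotient_node w) auto
    then show ?thesis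
      using orthonormal_basis_cinner[OF basis, of 0 n] by (auto simp: cinner_scaleC_left divide_inverse)
  qed
  then have w_eq: "w = scaleC (inverse (zs 0 - p)) (u 0)"
    by (rule orthonormal_basis_eqI[OF basis])
  have "F z (u 0) = 0" if "z \<noteq> zs 0" "z \<noteq> p" for z
  proof (rule ccontr)
    assume "F z (u 0) \<noteq> 0"
    have "scaleC (inverse (zs 0 - p)) (F z (u 0)) = scaleC (inverse (z - p)) (F z (u 0))"
      using w[OF that(2)] by (simp add: w_eq entire_op_scaleC[OF entire])
    from this \<open>F z (u 0) \<noteq> 0\<close> have "inverse (zs 0 - p) = inverse (z - p)" by (rule scaleC_right_cancel)
    then show False using that by simp
  qed
  then have "F (zs 0) (u 0) = 0"
    by (rule isCont_eq_0_if_eq_0_off_two_points[OF entire_op_isCont[OF entire]])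
  then show False using F_node_self_nonzero by blast
qed

text \<open>The nodes cannot accumulate: apart from \<open>z\<^sub>0\<close> they are zeros of the nonconstant entire
  function \<open>\<langle>F(z) u\<^sub>0, u\<^sub>0\<rangle>\<close>.\<close>
lemma nodes_tendsto_infinity: "filterlim zs at_infinity sequentially"
proof (rule filterlim_at_infinity_if_finite_in_cballs[OF inj_nodes])
  fix R :: real
  define p where "p z = cinner (F z (u 0)) (u 0)" for z
  have p_node: "p (zs n) = (if n = 0 then c 0 else 0)" for n
    using F_node_basis[of n 0] orthonormal_basis_cinner[OF basis, of 0 0]
    by (auto simp: p_def cinner_scaleC_left)
  have "\<not> p constant_on UNIV"
    using p_node[of 0] p_node[of 1] c_nonzero unfolding constant_on_def by (metis UNIV_I zero_neq_one)
  then have "finite {z \<in> cball 0 R. p z = 0}"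
    unfolding p_def
    by (intro holomorphic_compact_finite_zeros[OF entire_op_cinner_holomorphic[OF entire]])
      (auto simp: p_def)
  moreover have "range zs \<inter> cball 0 R \<subseteq> insert (zs 0) {z \<in> cball 0 R. p z = 0}"
    using p_node by auto
  ultimately show "finite (range zs \<inter> cball 0 R)" by (meson finite_insert finite_subset)
qed

context
  fixes Q :: "complex \<Rightarrow> complex"
  assumes Q_holomorphic: "Q holomorphic_on UNIV"
    and Q_zeros: "{z. Q z = 0} = range zs"
    and deriv_Q_nonzero: "\<forall>n. deriv Q (zs n) \<noteq> 0"
begin

definition A :: "complex \<Rightarrow> 'x::chilbert_space" where
  "A z = (if z \<in> range zs
     then scaleC (c (inv zs z) / (ratio (inv zs z) * deriv Q z)) (u (inv zs z))
     else scaleC (inverse (Q z)) (G 0 z))"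

lemma A_node: "A (zs n) = scaleC (c n / (ratio n * deriv Q (zs n))) (u n)"
  by (simp add: A_def inv_f_f[OF inj_nodes])

lemma A_off_nodes: "z \<notin> range zs \<Longrightarrow> A z = scaleC (inverse (Q z)) (G 0 z)"
  by (simp add: A_def)

lemma cinner_A_node: "cinner (A (zs n)) (u n) = c n / (ratio n * deriv Q (zs n))"
  using orthonormal_basis_cinner[OF basis, of n n] by (simp add: A_node cinner_scaleC_left)

lemma cinner_A_node_nonzero: "cinner (A (zs n)) (u n) \<noteq> 0"
  using c_nonzero ratio_nonzero deriv_Q_nonzero by (simp add: cinner_A_node)

lemma A_nonzero: "A z \<noteq> 0"
proof (cases "z \<in> range zs")
  case True
  then obtain n where "z = zs n" by auto
  then show ?thesis using cinner_A_node_nonzero[of n] by auto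
next
  case False
  then show ?thesis using G0_nonzero Q_zeros by (auto simp: A_off_nodes)
qed

lemma F_basis_eq_A: "F z (u n) = scaleC (ratio n * deriv Q (zs n) * lagr Q (zs n) z) (A z)"
proof (cases "z \<in> range zs")
  case True
  then obtain m where m: "z = zs m" by auto
  have "lagr Q (zs n) (zs m) = (if m = n then 1 else 0)"
    using lagr_node[of Q m n] Q_zeros by blast
  then show ?thesis
    using ratio_nonzero[of n] deriv_Q_nonzero
    by (auto simp: m F_node_basis A_node scaleC_scaleC)
next
  case False
  then have "z \<noteq> zs n" "Q z \<noteq> 0" using Q_zeros by auto
  moreover have "ratio n \<noteq> 0" "deriv Q (zs n) \<noteq> 0" using ratio_nonzero deriv_Q_nonzero by auto
  ultimately have "ratio n * deriv Q (zs n) * lagr Q (zs n) z * (inverse (Q z) * (inverse (ratio n) * (z - zs n))) = 1"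
    by (simp add: lagr_def field_simps)
  then show ?thesis
    by (simp add: A_off_nodes[OF False] G0_eq[of z n] scaleC_scaleC scaleC_one)
qed

lemma lagrange_expansion_sums:
  assumes "f \<in> HF F"
  shows "(\<lambda>n. scaleC (cinner (f (zs n)) (u n) * lagr Q (zs n) z / cinner (A (zs n)) (u n)) (A z)) sums f z"
proof -
  obtain v where f: "f = (\<lambda>z. F z v)" using assms by (auto simp: HF_def)
  have "cinner (f (zs n)) (u n) * lagr Q (zs n) z / cinner (A (zs n)) (u n)
      = cinner v (u n) * (ratio n * deriv Q (zs n) * lagr Q (zs n) z)" for n
    using c_nonzero ratio_nonzero[of n] deriv_Q_nonzero
    by (simp add: f cinner_F_node cinner_A_node field_simps)
  then show ?thesis
    using entire_op_sums[OF entire basis, of v z] by (simp add: f F_basis_eq_A[of z] scaleC_scaleC)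
qed

text \<open>Near any point some Lagrange factor \<open>lagr Q z\<^sub>n\<close> is nonzero, and there \<open>A\<close> is a
  holomorphic multiple of \<open>F(\<cdot>) u\<^sub>n\<close>.\<close>
lemma A_entire: "entire_vec A"
  unfolding entire_vec_def
proof
  fix p
  obtain n where "lagr Q (zs n) p \<noteq> 0"
  proof (cases "p \<in> range zs")
    case True
    then obtain m where "p = zs m" by auto
    then show ?thesis by (intro that[of m]) (simp add: lagr_def)
  next
    case False
    then have "Q p \<noteq> 0" "p \<noteq> zs 0" using Q_zeros by auto
    then show ?thesis using deriv_Q_nonzero by (intro that[of 0]) (simp add: lagr_def)
  qed
  define \<kappa> where "\<kappa> z = ratio n * deriv Q (zs n) * lagr Q (zs n) z" for z
  have \<kappa>_holo: "\<kappa> holomorphic_on UNIV"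
    unfolding \<kappa>_def using Q_zeros deriv_Q_nonzero
    by (intro holomorphic_intros lagr_holomorphic[OF Q_holomorphic]) auto
  define S where "S = {z. \<kappa> z \<noteq> 0}"
  have "open S"
    unfolding S_def using \<kappa>_holo
    by (intro open_Collect_neq) (auto intro: holomorphic_on_imp_continuous_on)
  have "p \<in> S"
    using \<open>lagr Q (zs n) p \<noteq> 0\<close> ratio_nonzero deriv_Q_nonzero by (simp add: S_def \<kappa>_def)
  have A_eq: "A z = scaleC (inverse (\<kappa> z)) (F z (u n))" if "z \<in> S" for z
  proof -
    have "F z (u n) = scaleC (\<kappa> z) (A z)" by (simp add: \<kappa>_def F_basis_eq_A)
    then show ?thesis using that by (simp add: S_def scaleC_scaleC scaleC_one)
  qed
  have "(\<lambda>z. inverse (\<kappa> z)) holomorphic_on S"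
    unfolding S_def using \<kappa>_holo by (intro holomorphic_intros) (auto intro: holomorphic_on_subset)
  then have "((\<lambda>z. inverse (\<kappa> z)) has_field_derivative deriv (\<lambda>z. inverse (\<kappa> z)) p) (at p)"
    using \<open>open S\<close> \<open>p \<in> S\<close> holomorphic_derivI by blast
  moreover obtain D where "has_cderiv (\<lambda>z. F z (u n)) D p"
    using entire_op_has_cderiv[OF entire] by blast
  ultimately have "has_cderiv (\<lambda>z. scaleC (inverse (\<kappa> z)) (F z (u n)))
      (scaleC (inverse (\<kappa> p)) D + scaleC (deriv (\<lambda>z. inverse (\<kappa> z)) p) (F p (u n))) p"
    by (rule has_cderiv_scaleC)
  from has_cderiv_transform_open[OF this \<open>open S\<close> \<open>p \<in> S\<close> A_eq]
  show "\<exists>D. has_cderiv A D p" by blast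
qed

end

theorem lagrange_expansion_exists:
  "\<exists>(Q :: complex \<Rightarrow> complex) (A :: complex \<Rightarrow> 'x::chilbert_space).
     Q holomorphic_on UNIV \<and> {z. Q z = 0} = range zs \<and> (\<forall>n. deriv Q (zs n) \<noteq> 0) \<and>
     entire_vec A \<and> (\<forall>z. A z \<noteq> 0) \<and> (\<forall>n. cinner (A (zs n)) (u n) \<noteq> 0) \<and>
     (\<forall>f \<in> HF F. \<forall>z.
       (\<lambda>n. scaleC (cinner (f (zs n)) (u n) * lagr Q (zs n) z / cinner (A (zs n)) (u n)) (A z)) sums f z)"
proof -
  obtain Q where Q: "Q holomorphic_on UNIV" "{z. Q z = 0} = range zs" "\<forall>n. deriv Q (zs n) \<noteq> 0"
    using entire_with_simple_zeros[OF inj_nodes nodes_tendsto_infinity] by blast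
  show ?thesis
    using Q A_entire[OF Q] A_nonzero[OF Q] cinner_A_node_nonzero[OF Q] lagrange_expansion_sums[OF Q]
    by blast
qed

end

theorem theorem4p1:
  fixes F :: "complex \<Rightarrow> 'x::chilbert_space \<Rightarrow> 'x"
    and u :: "nat \<Rightarrow> 'x" and zs :: "nat \<Rightarrow> complex" and c :: "nat \<Rightarrow> complex"
  assumes "entire_op F"
    and "orthonormal_basis u"
    and "\<forall>n. c n \<noteq> 0"
    and "\<forall>n v. F (zs n) v = scaleC (c n * cinner v (u n)) (u n)"
  shows "(\<exists>(Q :: complex \<Rightarrow> complex) (A :: complex \<Rightarrow> 'x).
            Q holomorphic_on UNIV \<and> {z. Q z = 0} = range zs \<and> (\<forall>n. deriv Q (zs n) \<noteq> 0) \<and>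
            entire_vec A \<and> (\<forall>z. A z \<noteq> 0) \<and> (\<forall>n. cinner (A (zs n)) (u n) \<noteq> 0) \<and>
            (\<forall>f \<in> HF F. \<forall>z.
               (\<lambda>n. scaleC (cinner (f (zs n)) (u n) * lagr Q (zs n) z / cinner (A (zs n)) (u n)) (A z))
                 sums f z))
     \<longleftrightarrow> (\<forall>\<beta>. \<forall>f \<in> Hzero (HF F) \<beta>. Rop \<beta> f \<in> HF F)"
proof -
  have nodes: "diagonal_at_nodes F u zs c" using assms by unfold_locales
  show ?thesis
    unfolding Rop_closed_iff_quotient_closed[OF assms(1)]
    using nodes lagrange_expansion.quotient_closed[of F u zs c]
      diagonal_quotient_closed.lagrange_expansion_exists[of F u zs c]
    unfolding lagrange_expansion_def lagrange_expansion_axioms_def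
      diagonal_quotient_closed_def diagonal_quotient_closed_axioms_def
    by blast
qed

end
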